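(* Let $n$ be a positive integer. (1) The graph obtained from two disjoint triangles $K_3$ by adding a perfect matching between them (the $i$-th vertex of one triangle joined to the $i$-th vertex of the other) is not a vertex-minor of $C_n$. (2) $C_7$ is not a vertex-minor of the graph obtained from two disjoint copies of $K_n$ by adding a perfect matching between them (the $i$-th vertex of one copy joined to the $i$-th vertex of the other).
   Context: All graphs are simple. A graph $H$ is a vertex-minor of $G$ if $H$ is an induced subgraph of a graph obtained from $G$ by a sequence of local complementations (local complementation at $v$ replaces the subgraph induced on the neighborhood of $v$ by its complement). $C_n$ is the cycle on $n$ vertices. *)

theory Defs
  imports Main
begin

definition simple_graph :: "'a set \<Rightarrow> ('a \<Rightarrow> 'a \<Rightarrow> bool) \<Rightarrow> bool" where
  "simple_graph V E \<longleftrightarrow> finite V \<and> (\<forall>x y. E x y \<longrightarrow> x \<in> V \<and> y \<in> V)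
     \<and> (\<forall>x y. E x y \<longrightarrow> E y x) \<and> (\<forall>x. \<not> E x x)"

definition local_comp :: "('a \<Rightarrow> 'a \<Rightarrow> bool) \<Rightarrow> 'a \<Rightarrow> ('a \<Rightarrow> 'a \<Rightarrow> bool)" where
  "local_comp E v = (\<lambda>x y. if E v x \<and> E v y \<and> x \<noteq> y then \<not> E x y else E x y)"

inductive lc_reach :: "('a \<Rightarrow> 'a \<Rightarrow> bool) \<Rightarrow> ('a \<Rightarrow> 'a \<Rightarrow> bool) \<Rightarrow> bool"
  for E where
  lc_refl: "lc_reach E E"
| lc_step: "lc_reach E E' \<Longrightarrow> lc_reach E (local_comp E' v)"

definition induced :: "('a \<Rightarrow> 'a \<Rightarrow> bool) \<Rightarrow> 'a set \<Rightarrow> ('a \<Rightarrow> 'a \<Rightarrow> bool)" where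
  "induced E W = (\<lambda>x y. E x y \<and> x \<in> W \<and> y \<in> W)"

definition graph_iso :: "'a set \<Rightarrow> ('a \<Rightarrow> 'a \<Rightarrow> bool) \<Rightarrow> 'b set \<Rightarrow> ('b \<Rightarrow> 'b \<Rightarrow> bool) \<Rightarrow> bool" where
  "graph_iso V1 E1 V2 E2 \<longleftrightarrow>
     (\<exists>f. bij_betw f V1 V2 \<and> (\<forall>x\<in>V1. \<forall>y\<in>V1. E1 x y \<longleftrightarrow> E2 (f x) (f y)))"

definition vertex_minor :: "'a set \<Rightarrow> ('a \<Rightarrow> 'a \<Rightarrow> bool) \<Rightarrow> 'b set \<Rightarrow> ('b \<Rightarrow> 'b \<Rightarrow> bool) \<Rightarrow> bool" where
  "vertex_minor VH EH VG EG \<longleftrightarrow>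
     (\<exists>E'. lc_reach EG E' \<and> (\<exists>W \<subseteq> VG. graph_iso VH EH W (induced E' W)))"

definition cycle_V :: "nat \<Rightarrow> nat set" where
  "cycle_V n = {0..<n}"

definition cycle_E :: "nat \<Rightarrow> nat \<Rightarrow> nat \<Rightarrow> bool" where
  "cycle_E n x y \<longleftrightarrow> x < n \<and> y < n \<and> x \<noteq> y \<and> (y = (x + 1) mod n \<or> x = (y + 1) mod n)"

definition twoK_V :: "nat \<Rightarrow> (nat \<times> bool) set" where
  "twoK_V n = {0..<n} \<times> UNIV"

definition twoK_E :: "nat \<Rightarrow> nat \<times> bool \<Rightarrow> nat \<times> bool \<Rightarrow> bool" where
  "twoK_E n u v \<longleftrightarrow> u \<in> twoK_V n \<and> v \<in> twoK_V n \<and>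
     ((snd u = snd v \<and> fst u \<noteq> fst v) \<or> (snd u \<noteq> snd v \<and> fst u = fst v))"

end

theory Submission
  imports Defs
begin

text \<open>Cut-rank over GF(2), the rank of the adjacency matrix between a vertex set and its
  complement, never grows under local complementation, and it can only drop when passing to an
  induced subgraph. In \<open>C\<^sub>n\<close> every initial segment \<open>{0..<t}\<close> has cut-rank at most 2, so a
  threshold splitting the six image vertices of an embedded prism 3 against 3 gives a cut of
  cut-rank at most 2 of the prism; but every such cut of the prism has cut-rank 3.
  In two copies of \<open>K\<^sub>n\<close> joined by a matching, every union of matching edges has cut-rank at
  most 2. Embedding \<open>C\<^sub>7\<close> partitions its vertices into classes of size at most 2 (vertices with the
  same index), and some union of classes is a triple of \<open>C\<^sub>7\<close> that is not an arc; such triples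
  have cut-rank 3.\<close>

text \<open>Read over GF(2), with \<open>\<and>\<close> as product and \<open>\<noteq>\<close> as sum: the \<open>X \<times> Y\<close> block of the
  adjacency matrix is \<open>\<alpha> u\<^sup>T + \<beta> w\<^sup>T\<close>, i.e. the cut-rank of \<open>X\<close> against \<open>Y\<close> is at most 2.\<close>
definition cut_rank_le_2 :: "('a \<Rightarrow> 'a \<Rightarrow> bool) \<Rightarrow> 'a set \<Rightarrow> 'a set \<Rightarrow> bool" where
  "cut_rank_le_2 E X Y \<longleftrightarrow> (\<exists>\<alpha> \<beta> u w. \<forall>x\<in>X. \<forall>y\<in>Y. E x y = ((\<alpha> x \<and> u y) \<noteq> (\<beta> x \<and> w y)))"

text \<open>Linear dependence over GF(2) of the rows of \<open>p\<close>, \<open>q\<close>, \<open>r\<close> in the columns \<open>Y\<close>.\<close>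
definition dependent_rows :: "('a \<Rightarrow> 'a \<Rightarrow> bool) \<Rightarrow> 'a set \<Rightarrow> 'a \<Rightarrow> 'a \<Rightarrow> 'a \<Rightarrow> bool" where
  "dependent_rows E Y p q r \<longleftrightarrow>
     (\<forall>y\<in>Y. \<not> E p y) \<or> (\<forall>y\<in>Y. \<not> E q y) \<or> (\<forall>y\<in>Y. \<not> E r y) \<or>
     (\<forall>y\<in>Y. E p y = E q y) \<or> (\<forall>y\<in>Y. E p y = E r y) \<or> (\<forall>y\<in>Y. E q y = E r y) \<or>
     (\<forall>y\<in>Y. E r y = (E p y \<noteq> E q y))"

lemma three_bool_pairs_dependent:
  "(\<not> a1 \<and> \<not> b1) \<or> (\<not> a2 \<and> \<not> b2) \<or> (\<not> a3 \<and> \<not> b3) \<or> (a1 = a2 \<and> b1 = b2) \<or>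
   (a1 = a3 \<and> b1 = b3) \<or> (a2 = a3 \<and> b2 = b3) \<or> (a3 = (a1 \<noteq> a2) \<and> b3 = (b1 \<noteq> b2))"
  by (cases a1; cases a2; cases a3; cases b1; cases b2; cases b3) simp_all

lemma cut_rank_le_2_dependent_rows:
  assumes "cut_rank_le_2 E X Y" "p \<in> X" "q \<in> X" "r \<in> X"
  shows "dependent_rows E Y p q r"
proof -
  obtain \<alpha> \<beta> u w where M: "\<forall>x\<in>X. \<forall>y\<in>Y. E x y = ((\<alpha> x \<and> u y) \<noteq> (\<beta> x \<and> w y))"
    using assms(1) unfolding cut_rank_le_2_def by blast
  have rows: "\<forall>y\<in>Y. E p y = ((\<alpha> p \<and> u y) \<noteq> (\<beta> p \<and> w y))"
       "\<forall>y\<in>Y. E q y = ((\<alpha> q \<and> u y) \<noteq> (\<beta> q \<and> w y))"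
       "\<forall>y\<in>Y. E r y = ((\<alpha> r \<and> u y) \<noteq> (\<beta> r \<and> w y))"
    using M assms(2-4) by simp_all
  show ?thesis
  proof (cases "\<alpha> r = (\<alpha> p \<noteq> \<alpha> q) \<and> \<beta> r = (\<beta> p \<noteq> \<beta> q)")
    case True
    have "E r y = (E p y \<noteq> E q y)" if "y \<in> Y" for y
      using bspec[OF rows(1) that] bspec[OF rows(2) that] bspec[OF rows(3) that] True by sat
    then show ?thesis unfolding dependent_rows_def by (intro disjI2) blast
  next
    case False
    with three_bool_pairs_dependent[of "\<alpha> p" "\<beta> p" "\<alpha> q" "\<beta> q" "\<alpha> r" "\<beta> r"]
    show ?thesis unfolding dependent_rows_def using rows by (elim disjE) simp_all
  qed
qed

lemma cut_rank_le_2_pullback: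
  assumes "cut_rank_le_2 E X Y" "f ` A \<subseteq> X" "f ` B \<subseteq> Y"
    and "\<And>a b. a \<in> A \<Longrightarrow> b \<in> B \<Longrightarrow> E' a b = E (f a) (f b)"
  shows "cut_rank_le_2 E' A B"
proof -
  obtain \<alpha> \<beta> u w where M: "\<forall>x\<in>X. \<forall>y\<in>Y. E x y = ((\<alpha> x \<and> u y) \<noteq> (\<beta> x \<and> w y))"
    using assms(1) unfolding cut_rank_le_2_def by blast
  have "\<forall>a\<in>A. \<forall>b\<in>B. E' a b = ((\<alpha> (f a) \<and> u (f b)) \<noteq> (\<beta> (f a) \<and> w (f b)))"
    using M assms(2-4) by (simp add: image_subset_iff)
  then show ?thesis unfolding cut_rank_le_2_def by (intro exI)
qed

lemma simple_graph_local_comp: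
  "simple_graph V E \<Longrightarrow> simple_graph V (local_comp E v)"
  unfolding simple_graph_def local_comp_def by auto

lemma simple_graph_lc_reach:
  "lc_reach E E' \<Longrightarrow> simple_graph V E \<Longrightarrow> simple_graph V E'"
  by (induction rule: lc_reach.induct) (auto intro: simple_graph_local_comp)

lemma cut_rank_le_2_local_comp:
  assumes G: "simple_graph V E" and cut: "cut_rank_le_2 E X (V - X)"
  shows "cut_rank_le_2 (local_comp E v) X (V - X)"
proof -
  obtain \<alpha> \<beta> u w where "\<forall>x\<in>X. \<forall>y\<in>V - X. E x y = ((\<alpha> x \<and> u y) \<noteq> (\<beta> x \<and> w y))"
    using cut unfolding cut_rank_le_2_def by blast
  note M = this[rule_format]
  have lc: "local_comp E v x y = (E x y \<noteq> (E v x \<and> E v y))" if "x \<in> X" "y \<in> V - X" for x y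
    using that unfolding local_comp_def by auto
  \<comment> \<open>For \<open>v \<in> X\<close> the new row of \<open>x\<close> is row \<open>x\<close> plus \<open>E v x\<close> times row \<open>v\<close>, which only changes
    the coefficients; for \<open>v \<in> V - X\<close> the correction is absorbed into the vectors \<open>u\<close>, \<open>w\<close>.\<close>
  consider "v \<in> X" | "v \<in> V - X" | "v \<notin> V" by blast
  then show ?thesis
  proof cases
    case 1
    have "\<forall>x\<in>X. \<forall>y\<in>V - X. local_comp E v x y =
            (((\<alpha> x \<noteq> (E v x \<and> \<alpha> v)) \<and> u y) \<noteq> ((\<beta> x \<noteq> (E v x \<and> \<beta> v)) \<and> w y))"
    proof (intro ballI)
      fix x y assume "x \<in> X" "y \<in> V - X"
      then show "local_comp E v x y = (((\<alpha> x \<noteq> (E v x \<and> \<alpha> v)) \<and> u y) \<noteq> ((\<beta> x \<noteq> (E v x \<and> \<beta> v)) \<and> w y))"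
        using M[of x y] M[OF 1, of y] lc[of x y] by sat
    qed
    then show ?thesis unfolding cut_rank_le_2_def by (intro exI)
  next
    case 2
    have "\<forall>x\<in>X. \<forall>y\<in>V - X. local_comp E v x y =
            ((\<alpha> x \<and> (u y \<noteq> (u v \<and> E v y))) \<noteq> (\<beta> x \<and> (w y \<noteq> (w v \<and> E v y))))"
    proof (intro ballI)
      fix x y assume "x \<in> X" "y \<in> V - X"
      moreover have "E v x = E x v" using G unfolding simple_graph_def by blast
      ultimately show "local_comp E v x y =
          ((\<alpha> x \<and> (u y \<noteq> (u v \<and> E v y))) \<noteq> (\<beta> x \<and> (w y \<noteq> (w v \<and> E v y))))"
        using M[of x y] M[of x v] 2 lc[of x y] by sat
    qed
    then show ?thesis unfolding cut_rank_le_2_def by (intro exI)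
  next
    case 3
    then have "local_comp E v = E"
      using G unfolding simple_graph_def local_comp_def by (intro ext) auto
    with cut show ?thesis by simp
  qed
qed

lemma lc_reach_cut_rank_le_2:
  assumes "lc_reach E E'" "simple_graph V E" "cut_rank_le_2 E X (V - X)"
  shows "cut_rank_le_2 E' X (V - X)"
  using assms(1)
proof induction
  case lc_refl
  show ?case using assms(3) .
next
  case (lc_step E' v)
  show ?case
    by (rule cut_rank_le_2_local_comp[OF simple_graph_lc_reach[OF lc_step.hyps assms(2)] lc_step.IH])
qed

lemma vertex_minor_cut_rank_le_2:
  assumes "vertex_minor VH EH VG EG" "simple_graph VG EG"
  obtains f where "inj_on f VH" "f ` VH \<subseteq> VG"
    "\<And>X. cut_rank_le_2 EG X (VG - X) \<Longrightarrow> cut_rank_le_2 EH (VH \<inter> f -` X) (VH - VH \<inter> f -` X)"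
proof -
  obtain E' W f where E': "lc_reach EG E'" and W: "W \<subseteq> VG" and f: "bij_betw f VH W"
    and iso: "\<And>x y. x \<in> VH \<Longrightarrow> y \<in> VH \<Longrightarrow> EH x y \<longleftrightarrow> induced E' W (f x) (f y)"
    using assms(1) unfolding vertex_minor_def graph_iso_def by blast
  have fW: "f ` VH = W" using f by (simp add: bij_betw_def)
  show ?thesis
  proof
    show "inj_on f VH" using f by (simp add: bij_betw_def)
    show "f ` VH \<subseteq> VG" using fW W by simp
  next
    fix X assume "cut_rank_le_2 EG X (VG - X)"
    then have "cut_rank_le_2 E' X (VG - X)"
      using lc_reach_cut_rank_le_2[OF E' assms(2)] by blast
    then show "cut_rank_le_2 EH (VH \<inter> f -` X) (VH - VH \<inter> f -` X)"
    proof (rule cut_rank_le_2_pullback)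
      show "f ` (VH - VH \<inter> f -` X) \<subseteq> VG - X" using fW W by blast
      show "EH a b = E' (f a) (f b)" if "a \<in> VH \<inter> f -` X" "b \<in> VH - VH \<inter> f -` X" for a b
        using iso[of a b] that fW unfolding induced_def by blast
    qed blast
  qed
qed

lemma ball_Diff_iff: "(\<forall>x\<in>A - B. P x) \<longleftrightarrow> (\<forall>x\<in>A. x \<notin> B \<longrightarrow> P x)"
  by blast

lemma simple_graph_cycle: "simple_graph (cycle_V n) (cycle_E n)"
  unfolding simple_graph_def cycle_V_def cycle_E_def by auto

lemma cycle_E_iff:
  assumes "2 \<le> n"
  shows "cycle_E n x y \<longleftrightarrow> x < n \<and> y < n \<and>
    (y = x + 1 \<or> x = y + 1 \<or> (x = 0 \<and> y = n - 1) \<or> (y = 0 \<and> x = n - 1))"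
proof -
  have "(x + 1) mod n = (if x + 1 = n then 0 else x + 1)" if "x < n" for x
    using that by (simp add: le_less)
  then show ?thesis using assms unfolding cycle_E_def by (auto split: if_splits)
qed

lemma cycle_E_across_cut:
  assumes "x < t" "t \<le> y" "y < n"
  shows "cycle_E n x y \<longleftrightarrow> (x + 1 = t \<and> y = t) \<or> (x = 0 \<and> y = n - 1)"
  using assms by (subst cycle_E_iff) auto

lemma cut_rank_le_2_cycle_interval: "cut_rank_le_2 (cycle_E n) {0..<t} (cycle_V n - {0..<t})"
  unfolding cut_rank_le_2_def
proof (intro exI ballI)
  fix x y assume "x \<in> {0..<t}" "y \<in> cycle_V n - {0..<t}"
  then show "cycle_E n x y = ((x + 1 = t \<and> y = t) \<noteq> ((x = 0 \<and> \<not> (x + 1 = t \<and> t = n - 1)) \<and> y = n - 1))"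
    using cycle_E_across_cut[of x t y n] unfolding cycle_V_def by auto
qed

lemma card_less_threshold:
  fixes W :: "nat set"
  assumes "finite W" "k \<le> card W"
  shows "\<exists>t. card {w\<in>W. w < t} = k"
  using assms(2)
proof (induction k)
  case 0
  show ?case by (rule exI[of _ 0]) simp
next
  case (Suc k)
  then obtain t where t: "card {w\<in>W. w < t} = k" by auto
  have "{w\<in>W. w < t} \<noteq> W"
  proof
    assume "{w\<in>W. w < t} = W"
    then have "card W = k" using t by simp
    with Suc.prems show False by simp
  qed
  then have nonempty: "{w\<in>W. t \<le> w} \<noteq> {}" by (auto simp: not_less)
  define m where "m = Min {w\<in>W. t \<le> w}"
  have m: "m \<in> W" "t \<le> m" "\<And>w. w \<in> W \<Longrightarrow> t \<le> w \<Longrightarrow> m \<le> w"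
    using Min_in[OF _ nonempty] assms(1) unfolding m_def by auto
  have "{w\<in>W. w < Suc m} = insert m {w\<in>W. w < t}"
  proof (intro set_eqI iffI)
    fix w assume "w \<in> {w\<in>W. w < Suc m}"
    then show "w \<in> insert m {w\<in>W. w < t}" using m(3)[of w] by (cases "w < t") auto
  qed (use m in auto)
  moreover have "m \<notin> {w\<in>W. w < t}" using m(2) by simp
  ultimately have "card {w\<in>W. w < Suc m} = Suc k"
    using t assms(1) by simp
  then show ?case by blast
qed

lemma twoK_V_3: "twoK_V 3 = {(0,False),(1,False),(2,False),(0,True),(1,True),(2,True)}"
  unfolding twoK_V_def by (auto simp: less_Suc_eq numeral_eq_Suc)

lemma twoK_E_3:
  "twoK_E 3 (a, s) (b, s') \<longleftrightarrow> a < 3 \<and> b < 3 \<and> ((s = s' \<and> a \<noteq> b) \<or> (s \<noteq> s' \<and> a = b))"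
  unfolding twoK_E_def twoK_V_def by auto

lemma prism_rows_independent:
  "\<forall>p\<in>twoK_V 3. \<forall>q\<in>twoK_V 3. \<forall>r\<in>twoK_V 3. p \<noteq> q \<longrightarrow> p \<noteq> r \<longrightarrow> q \<noteq> r \<longrightarrow>
     \<not> dependent_rows (twoK_E 3) (twoK_V 3 - {p, q, r}) p q r"
  unfolding dependent_rows_def ball_Diff_iff twoK_V_3 by (simp add: twoK_E_3)

lemma prism_triple_not_cut_rank_le_2:
  assumes "A \<subseteq> twoK_V 3" "card A = 3"
  shows "\<not> cut_rank_le_2 (twoK_E 3) A (twoK_V 3 - A)"
proof
  assume cut: "cut_rank_le_2 (twoK_E 3) A (twoK_V 3 - A)"
  obtain p q r where A: "A = {p, q, r}" and distinct: "p \<noteq> q" "p \<noteq> r" "q \<noteq> r"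
    using assms(2) card_3_iff by metis
  have "p \<in> twoK_V 3" "q \<in> twoK_V 3" "r \<in> twoK_V 3" using assms(1) A by auto
  from prism_rows_independent[rule_format, OF this distinct]
  show False using cut_rank_le_2_dependent_rows[OF cut] A by simp
qed

lemma not_vertex_minor_prism_cycle:
  "\<not> vertex_minor (twoK_V 3) (twoK_E 3) (cycle_V n) (cycle_E n)"
proof
  assume "vertex_minor (twoK_V 3) (twoK_E 3) (cycle_V n) (cycle_E n)"
  then obtain f where inj: "inj_on f (twoK_V 3)" and "f ` twoK_V 3 \<subseteq> cycle_V n"
    and cut: "\<And>X. cut_rank_le_2 (cycle_E n) X (cycle_V n - X) \<Longrightarrow>
      cut_rank_le_2 (twoK_E 3) (twoK_V 3 \<inter> f -` X) (twoK_V 3 - twoK_V 3 \<inter> f -` X)"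
    by (rule vertex_minor_cut_rank_le_2[OF _ simple_graph_cycle that])
  have "finite (f ` twoK_V 3)" by (simp add: twoK_V_def)
  moreover have "card (f ` twoK_V 3) = 6"
    using card_image[OF inj] by (simp add: twoK_V_3)
  ultimately obtain t where t: "card {w \<in> f ` twoK_V 3. w < t} = 3"
    using card_less_threshold[of "f ` twoK_V 3" 3] by auto
  define A where "A = twoK_V 3 \<inter> f -` {0..<t}"
  have "A \<subseteq> twoK_V 3" unfolding A_def by blast
  have "f ` A = {w \<in> f ` twoK_V 3. w < t}" unfolding A_def by auto
  then have "card A = 3"
    using t card_image[OF inj_on_subset[OF inj \<open>A \<subseteq> twoK_V 3\<close>]] by simp
  moreover have "cut_rank_le_2 (twoK_E 3) A (twoK_V 3 - A)"
    using cut[OF cut_rank_le_2_cycle_interval] unfolding A_def .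
  ultimately show False
    using prism_triple_not_cut_rank_le_2[OF \<open>A \<subseteq> twoK_V 3\<close>] by blast
qed

lemma simple_graph_twoK: "simple_graph (twoK_V n) (twoK_E n)"
  unfolding simple_graph_def twoK_V_def twoK_E_def by auto

lemma cut_rank_le_2_twoK_columns:
  assumes "S \<subseteq> {0..<n}"
  shows "cut_rank_le_2 (twoK_E n) (S \<times> UNIV) (twoK_V n - S \<times> UNIV)"
  unfolding cut_rank_le_2_def
proof (intro exI ballI)
  fix x y :: "nat \<times> bool" assume "x \<in> S \<times> UNIV" "y \<in> twoK_V n - S \<times> UNIV"
  then show "twoK_E n x y = ((\<not> snd x \<and> \<not> snd y) \<noteq> (snd x \<and> snd y))"
    using assms unfolding twoK_E_def twoK_V_def by auto
qed

lemma cycle_V_7: "cycle_V 7 = {0, 1, 2, 3, 4, 5, 6}"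
  unfolding cycle_V_def by auto

lemma cycle7_rows_independent:
  "\<forall>p\<in>cycle_V 7. \<forall>q\<in>cycle_V 7. \<forall>r\<in>cycle_V 7. p < q \<longrightarrow> q < r \<longrightarrow>
     (\<forall>x\<in>{p, q, r}. \<exists>y\<in>cycle_V 7. y \<notin> {p, q, r} \<and> cycle_E 7 x y) \<longrightarrow>
     \<not> dependent_rows (cycle_E 7) (cycle_V 7 - {p, q, r}) p q r"
  unfolding dependent_rows_def ball_Diff_iff cycle_V_7 by (simp add: cycle_E_iff)

text \<open>The last hypothesis says that \<open>{p, q, r}\<close> is not an arc of three consecutive vertices.\<close>
lemma cycle7_triple_not_cut_rank_le_2:
  assumes "p \<in> cycle_V 7" "q \<in> cycle_V 7" "r \<in> cycle_V 7" "p < q" "q < r"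
    and "\<forall>x\<in>{p, q, r}. \<exists>y\<in>cycle_V 7. y \<notin> {p, q, r} \<and> cycle_E 7 x y"
  shows "\<not> cut_rank_le_2 (cycle_E 7) {p, q, r} (cycle_V 7 - {p, q, r})"
  using cycle7_rows_independent assms cut_rank_le_2_dependent_rows[of "cycle_E 7" "{p, q, r}" _ p q r]
  by blast

text \<open>Some non-arc triple is a union of classes of the partial matching \<open>R\<close>: a matched pair
  with a suitable unmatched vertex, or three unmatched vertices.\<close>
lemma cycle7_closed_triple:
  fixes R :: "nat \<Rightarrow> nat \<Rightarrow> bool"
  assumes sym: "\<And>a b. R a b \<Longrightarrow> R b a"
    and unique: "\<And>a b c. a \<in> cycle_V 7 \<Longrightarrow> b \<in> cycle_V 7 \<Longrightarrow> c \<in> cycle_V 7 \<Longrightarrow>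
      a \<noteq> b \<Longrightarrow> a \<noteq> c \<Longrightarrow> b \<noteq> c \<Longrightarrow> R a b \<Longrightarrow> R a c \<Longrightarrow> False"
  shows "\<exists>p\<in>cycle_V 7. \<exists>q\<in>cycle_V 7. \<exists>r\<in>cycle_V 7. p < q \<and> q < r \<and>
     (\<forall>x\<in>{p, q, r}. \<exists>y\<in>cycle_V 7. y \<notin> {p, q, r} \<and> cycle_E 7 x y) \<and>
     (\<forall>a\<in>{p, q, r}. \<forall>b\<in>cycle_V 7. R a b \<longrightarrow> b \<in> {p, q, r})"
proof (rule ccontr)
  assume "\<not> ?thesis"
  then have "\<forall>p\<in>cycle_V 7. \<forall>q\<in>cycle_V 7. \<forall>r\<in>cycle_V 7. p < q \<longrightarrow> q < r \<longrightarrow>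
     (\<forall>x\<in>{p, q, r}. \<exists>y\<in>cycle_V 7. y \<notin> {p, q, r} \<and> cycle_E 7 x y) \<longrightarrow>
     (\<exists>a\<in>{p, q, r}. \<exists>b\<in>cycle_V 7. R a b \<and> b \<notin> {p, q, r})"
    by blast
  note broken = this[unfolded cycle_V_7 cycle_E_iff[of 7, simplified], simplified]
  have "\<forall>a\<in>cycle_V 7. \<forall>b\<in>cycle_V 7. R a b \<longrightarrow> R b a" using sym by blast
  note sym7 = this[unfolded cycle_V_7, simplified]
  have "\<forall>a\<in>cycle_V 7. \<forall>b\<in>cycle_V 7. \<forall>c\<in>cycle_V 7. a \<noteq> b \<longrightarrow> a \<noteq> c \<longrightarrow> b \<noteq> c \<longrightarrow> \<not> (R a b \<and> R a c)"
    using unique by blast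
  note unique7 = this[unfolded cycle_V_7, simplified]
  show False using broken sym7 unique7 by sat
qed

lemma not_vertex_minor_cycle7_twoK:
  "\<not> vertex_minor (cycle_V 7) (cycle_E 7) (twoK_V n) (twoK_E n)"
proof
  assume "vertex_minor (cycle_V 7) (cycle_E 7) (twoK_V n) (twoK_E n)"
  then obtain f where inj: "inj_on f (cycle_V 7)" and into: "f ` cycle_V 7 \<subseteq> twoK_V n"
    and cut: "\<And>X. cut_rank_le_2 (twoK_E n) X (twoK_V n - X) \<Longrightarrow>
      cut_rank_le_2 (cycle_E 7) (cycle_V 7 \<inter> f -` X) (cycle_V 7 - cycle_V 7 \<inter> f -` X)"
    by (rule vertex_minor_cut_rank_le_2[OF _ simple_graph_twoK that])
  define R where "R a b \<longleftrightarrow> fst (f a) = fst (f b)" for a b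
  have "\<exists>p\<in>cycle_V 7. \<exists>q\<in>cycle_V 7. \<exists>r\<in>cycle_V 7. p < q \<and> q < r \<and>
     (\<forall>x\<in>{p, q, r}. \<exists>y\<in>cycle_V 7. y \<notin> {p, q, r} \<and> cycle_E 7 x y) \<and>
     (\<forall>a\<in>{p, q, r}. \<forall>b\<in>cycle_V 7. R a b \<longrightarrow> b \<in> {p, q, r})"
  proof (rule cycle7_closed_triple)
    show "R b a" if "R a b" for a b using that unfolding R_def by simp
  next
    fix a b c assume "a \<in> cycle_V 7" "b \<in> cycle_V 7" "c \<in> cycle_V 7" "a \<noteq> b" "a \<noteq> c" "b \<noteq> c"
      and "R a b" "R a c"
    then have "f a \<noteq> f b" "f a \<noteq> f c" "f b \<noteq> f c"
      using inj unfolding inj_on_def by metis+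
    with \<open>R a b\<close> \<open>R a c\<close> have "snd (f a) \<noteq> snd (f b)" "snd (f a) \<noteq> snd (f c)" "snd (f b) \<noteq> snd (f c)"
      unfolding R_def by (auto simp: prod_eq_iff)
    then show False by auto
  qed
  then obtain p q r where pqr: "p \<in> cycle_V 7" "q \<in> cycle_V 7" "r \<in> cycle_V 7" "p < q" "q < r"
    and no_inner: "\<forall>x\<in>{p, q, r}. \<exists>y\<in>cycle_V 7. y \<notin> {p, q, r} \<and> cycle_E 7 x y"
    and closed: "\<forall>a\<in>{p, q, r}. \<forall>b\<in>cycle_V 7. R a b \<longrightarrow> b \<in> {p, q, r}"
    by blast
  define S where "S = fst ` f ` {p, q, r}"
  have "S \<subseteq> {0..<n}" using into pqr unfolding S_def twoK_V_def by auto
  have "cycle_V 7 \<inter> f -` (S \<times> UNIV) = {p, q, r}"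
    using pqr closed unfolding S_def R_def by (auto simp: mem_Times_iff)
  then have "cut_rank_le_2 (cycle_E 7) {p, q, r} (cycle_V 7 - {p, q, r})"
    using cut[OF cut_rank_le_2_twoK_columns[OF \<open>S \<subseteq> {0..<n}\<close>]] by simp
  with cycle7_triple_not_cut_rank_le_2[OF pqr no_inner] show False by contradiction
qed

theorem proposition8p1:
  fixes n :: nat
  assumes "0 < n"
  shows "\<not> vertex_minor (twoK_V 3) (twoK_E 3) (cycle_V n) (cycle_E n)
       \<and> \<not> vertex_minor (cycle_V 7) (cycle_E 7) (twoK_V n) (twoK_E n)"
  \<comment> \<open>neither part needs \<open>0 < n\<close>\<close>
  using not_vertex_minor_prism_cycle not_vertex_minor_cycle7_twoK by blast

end
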